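(* Let $\Sigma\in\mathbb{R}^{n\times n}$ be a symmetric positive definite matrix with eigenvalues $\lambda_1,\ldots,\lambda_n$ and condition number $\kappa=\lambda_{\max}/\lambda_{\min}$, where $\lambda_{\max}=\max_i\lambda_i$, $\lambda_{\min}=\min_i\lambda_i$. For $0<D\le\mathrm{tr}(\Sigma)$ let $L>0$ satisfy $\sum_{i=1}^n\min\{L,\lambda_i\}=D$, $D_i=\min\{L,\lambda_i\}$, and $R(D)=\sum_{i=1}^n\frac12\log\frac{\lambda_i}{D_i}$. For $\alpha\in[0,1]$, $D>0$ let $R_\alpha(D)=\frac12\log\det\big(\alpha I+\frac{n}{D}\Sigma\big)$, and let $\alpha^*\in[0,1]$ be the unique value with $R_{\alpha^*}(\mathrm{tr}(\Sigma))=0$. Then for every $D\in(0,\mathrm{tr}(\Sigma)]$, $$\frac12\log\frac1\kappa\le\frac{R_{\alpha^*}(D)-R(D)}{n}\le\frac12\log\Big(2-\frac1\kappa\Big).$$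
   Context: $\log$ denotes the logarithm to a fixed base greater than $1$. $R(D)$ is the mean-square-distortion rate-distortion function of an $n$-dimensional Gaussian vector with covariance $\Sigma$ (reverse water-filling); $I$ is the $n\times n$ identity matrix. *)

theory Defs
  imports Complex_Main "Jordan_Normal_Form.Jordan_Normal_Form"
begin

definition mat_trace :: "real mat \<Rightarrow> real" where
  "mat_trace A = (\<Sum>i<dim_row A. A $$ (i, i))"

definition symmetric_mat :: "real mat \<Rightarrow> bool" where
  "symmetric_mat A \<longleftrightarrow> transpose_mat A = A"

definition pos_def_mat :: "nat \<Rightarrow> real mat \<Rightarrow> bool" where
  "pos_def_mat n A \<longleftrightarrow> A \<in> carrier_mat n n \<and>
     (\<forall>v \<in> carrier_vec n. v \<noteq> 0\<^sub>v n \<longrightarrow> v \<bullet> (A *\<^sub>v v) > 0)"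

definition eigenvalues_mult :: "nat \<Rightarrow> real mat \<Rightarrow> (nat \<Rightarrow> real) \<Rightarrow> bool" where
  "eigenvalues_mult n A lam \<longleftrightarrow> char_poly A = (\<Prod>i<n. [:- lam i, 1:])"

definition R_alpha :: "real \<Rightarrow> nat \<Rightarrow> real mat \<Rightarrow> real \<Rightarrow> real \<Rightarrow> real" where
  "R_alpha b n S alpha D = 1/2 * log b (det (alpha \<cdot>\<^sub>m 1\<^sub>m n + (real n / D) \<cdot>\<^sub>m S))"

text \<open>Reverse water-filling rate-distortion function, given water level L.\<close>
definition R_wf :: "real \<Rightarrow> nat \<Rightarrow> (nat \<Rightarrow> real) \<Rightarrow> real \<Rightarrow> real" where
  "R_wf b n lam L = (\<Sum>i<n. 1/2 * log b (lam i / min L (lam i)))"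

end

theory Submission
  imports Defs "Jordan_Normal_Form.Schur_Decomposition"
begin

text \<open>
  In the eigenbasis both rates are sums over the eigenvalues, and
  \<open>R\<^sub>\<alpha>\<^sub>*(D) - R(D) = 1/2 \<Sum>\<^sub>i log A\<^sub>i\<close> with the gap factors \<open>A\<^sub>i = (\<alpha>\<^sup>* + n \<lambda>\<^sub>i / D) D\<^sub>i / \<lambda>\<^sub>i\<close>.
  The water-filling components satisfy \<open>\<lambda>\<^sub>m\<^sub>i\<^sub>n D\<^sub>k \<le> \<lambda>\<^sub>m\<^sub>a\<^sub>x D\<^sub>i\<close> and sum to \<open>D\<close>, so
  \<open>A\<^sub>i \<ge> n D\<^sub>i / D \<ge> 1/\<kappa>\<close>, which is the lower bound.
  The normalisation \<open>R\<^sub>\<alpha>\<^sub>*(tr \<Sigma>) = 0\<close> means \<open>\<Prod>\<^sub>i (\<alpha>\<^sup>* + n \<lambda>\<^sub>i / tr \<Sigma>) = 1\<close>; the smallest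
  factor is then at most 1, whence \<open>\<alpha>\<^sup>* \<le> 1 - 1/\<kappa>\<close> and \<open>\<Sum>\<^sub>i A\<^sub>i \<le> n (\<alpha>\<^sup>* + 1) \<le> n (2 - 1/\<kappa>)\<close>.
  The upper bound follows by AM-GM.
\<close>

lemma mat_trace_mult_comm:
  fixes X Y :: "real mat"
  assumes X: "X \<in> carrier_mat n m" and Y: "Y \<in> carrier_mat m n"
  shows "mat_trace (X * Y) = mat_trace (Y * X)"
proof -
  have "mat_trace (X * Y) = (\<Sum>i<n. \<Sum>k<m. X $$ (i,k) * Y $$ (k,i))"
    unfolding mat_trace_def using X Y
    by (intro sum.cong) (auto simp: scalar_prod_def atLeast0LessThan)
  also have "\<dots> = (\<Sum>k<m. \<Sum>i<n. Y $$ (k,i) * X $$ (i,k))"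
    by (subst sum.swap) (simp add: mult.commute)
  also have "\<dots> = mat_trace (Y * X)"
    unfolding mat_trace_def using X Y
    by (intro sum.cong) (auto simp: scalar_prod_def atLeast0LessThan)
  finally show ?thesis .
qed

lemma mat_trace_eq_sum_eigenvalues:
  fixes S :: "real mat"
  assumes S: "S \<in> carrier_mat n n" and eig: "eigenvalues_mult n S lam"
  shows "mat_trace S = (\<Sum>i<n. lam i)"
proof -
  define es where "es = map lam [0..<n]"
  have char_poly: "char_poly S = (\<Prod>e\<leftarrow>es. [:- e, 1:])"
    using eig unfolding eigenvalues_mult_def es_def
    by (simp add: prod.distinct_set_conv_list[symmetric] atLeast0LessThan)
  obtain B P Q where BPQ: "schur_decomposition S es = (B, P, Q)"
    by (cases "schur_decomposition S es") auto
  from schur_decomposition[OF S char_poly BPQ]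
  have sim: "similar_mat_wit S B P Q" and diag: "diag_mat B = es" by auto
  from sim S have B: "B \<in> carrier_mat n n" and P: "P \<in> carrier_mat n n"
    and Q: "Q \<in> carrier_mat n n" and "Q * P = 1\<^sub>m n" and "S = P * B * Q"
    unfolding similar_mat_wit_def Let_def by auto
  then have "mat_trace S = mat_trace (Q * (P * B))"
    using mat_trace_mult_comm[of "P * B" n n Q] by simp
  also have "Q * (P * B) = B"
    using P B Q \<open>Q * P = 1\<^sub>m n\<close> by (simp add: assoc_mult_mat[symmetric])
  also have "mat_trace B = (\<Sum>i<n. lam i)"
  proof -
    have "B $$ (i, i) = lam i" if "i < n" for i
      using arg_cong[OF diag, of "\<lambda>xs. xs ! i"] B that unfolding diag_mat_def es_def by simp
    then show ?thesis
      using B unfolding mat_trace_def by simp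
  qed
  finally show ?thesis .
qed

lemma det_scalar_plus_smult_eq_prod_eigenvalues:
  fixes S :: "real mat"
  assumes S: "S \<in> carrier_mat n n" and eig: "eigenvalues_mult n S lam" and c: "c \<noteq> 0"
  shows "det (a \<cdot>\<^sub>m 1\<^sub>m n + c \<cdot>\<^sub>m S) = (\<Prod>i<n. a + c * lam i)"
proof -
  define t where "t = - a / c"
  define M where "M = t \<cdot>\<^sub>m 1\<^sub>m n - S"
  have M: "M \<in> carrier_mat n n" unfolding M_def using S by auto
  have "det M = poly (char_poly S) t"
    unfolding char_poly_def
    by (rule poly_det_cong[OF M, symmetric]) (use S in \<open>auto simp: char_poly_matrix_def M_def\<close>)
  also have "\<dots> = (\<Prod>i<n. t - lam i)"
    using eig unfolding eigenvalues_mult_def by (simp add: poly_prod)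
  finally have det_M: "det M = (\<Prod>i<n. t - lam i)" .
  have "a \<cdot>\<^sub>m 1\<^sub>m n + c \<cdot>\<^sub>m S = (- c) \<cdot>\<^sub>m M"
    by (rule eq_matI) (use S c in \<open>auto simp: M_def t_def field_simps\<close>)
  then have "det (a \<cdot>\<^sub>m 1\<^sub>m n + c \<cdot>\<^sub>m S) = (- c) ^ n * (\<Prod>i<n. t - lam i)"
    using M by (simp add: det_M)
  also have "\<dots> = (\<Prod>i<n. (- c) * (t - lam i))"
    by (subst prod.distrib) simp
  also have "\<dots> = (\<Prod>i<n. a + c * lam i)"
    using c unfolding t_def by (intro prod.cong) (auto simp: field_simps)
  finally show ?thesis .
qed

lemma eigenvalue_pos_if_pos_def:
  fixes S :: "real mat"
  assumes pd: "pos_def_mat n S" and eig: "eigenvalues_mult n S lam" and i: "i < n"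
  shows "lam i > 0"
proof -
  have S: "S \<in> carrier_mat n n"
    using pd unfolding pos_def_mat_def by auto
  have "poly (char_poly S) (lam i) = (\<Prod>j<n. lam i - lam j)"
    using eig by (simp add: eigenvalues_mult_def poly_prod)
  also have "\<dots> = 0"
    using i by (intro prod_zero) auto
  finally obtain v where "eigenvector S v (lam i)"
    using eigenvalue_root_char_poly[OF S] unfolding eigenvalue_def by auto
  then have v: "v \<in> carrier_vec n" "v \<noteq> 0\<^sub>v n" and Sv: "S *\<^sub>v v = lam i \<cdot>\<^sub>v v"
    using S unfolding eigenvector_def by auto
  then have "0 < v \<bullet> (S *\<^sub>v v)"
    using pd unfolding pos_def_mat_def by auto
  also have "\<dots> = lam i * (v \<bullet> v)"
    using v Sv by (simp add: scalar_prod_smult_right)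
  finally have "0 < lam i * (v \<bullet> v)" .
  moreover have "v \<bullet> v \<ge> 0"
    unfolding scalar_prod_def by (intro sum_nonneg) auto
  ultimately show ?thesis
    by (simp add: zero_less_mult_iff)
qed

lemma log_prod_pos:
  fixes f :: "'a \<Rightarrow> real"
  assumes "finite I" "\<And>i. i \<in> I \<Longrightarrow> 0 < f i"
  shows "log b (\<Prod>i\<in>I. f i) = (\<Sum>i\<in>I. log b (f i))"
  using assms by (induct I rule: finite_induct) (auto simp: log_mult_pos prod_pos)

lemma sum_log_le_card_mult_log:
  fixes x :: "'a \<Rightarrow> real" and m :: real
  assumes b: "1 < b" and I: "finite I" and x: "\<And>i. i \<in> I \<Longrightarrow> 0 < x i"
    and m: "0 < m" and sum_x: "sum x I \<le> card I * m"
  shows "(\<Sum>i\<in>I. log b (x i)) \<le> card I * log b m"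
proof -
  have "ln (x i) - ln m \<le> x i / m - 1" if "i \<in> I" for i
    using ln_le_minus_one[of "x i / m"] x[OF that] m by (simp add: ln_div)
  then have "(\<Sum>i\<in>I. ln (x i) - ln m) \<le> (\<Sum>i\<in>I. x i / m - 1)"
    by (rule sum_mono)
  also have "\<dots> = sum x I / m - card I"
    by (simp add: sum_subtractf sum_divide_distrib)
  also have "\<dots> \<le> 0"
    using sum_x m by (simp add: field_simps)
  finally have "(\<Sum>i\<in>I. ln (x i)) \<le> card I * ln m"
    by (simp add: sum_subtractf)
  then show ?thesis
    using b unfolding log_def by (simp add: sum_divide_distrib[symmetric] divide_right_mono)
qed

lemma ex_factor_le_one_if_prod_eq_one:
  fixes f :: "'a \<Rightarrow> 'b :: linordered_semidom"
  assumes "finite I" "I \<noteq> {}" "prod f I = 1"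
  shows "\<exists>i\<in>I. f i \<le> 1"
proof (rule ccontr)
  assume "\<not> (\<exists>i\<in>I. f i \<le> 1)"
  then have gt: "1 < f j" if "j \<in> I" for j
    using that by (simp add: not_le)
  then have "1 \<le> f j" "0 < f j" if "j \<in> I" for j
    using that by (auto intro: less_imp_le less_trans[OF less_numeral_extra(1)])
  moreover obtain i where "i \<in> I"
    using assms by blast
  ultimately have "prod (\<lambda>_. 1) I < prod f I"
    using assms gt by (intro prod_mono_strict[of i]) auto
  with assms show False by simp
qed

lemma mult_min_le_mult_min:
  fixes L x y lmin lmax :: real
  assumes "0 \<le> L" "0 < lmin" "lmin \<le> lmax" "lmin \<le> y" "x \<le> lmax"
  shows "lmin * min L x \<le> lmax * min L y"
proof -
  have "lmin * min L x \<le> lmin * min L lmax"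
    using assms by (intro mult_left_mono) auto
  also have "\<dots> = min (lmin * L) (lmin * lmax)"
    using assms by (simp add: min_mult_distrib_left)
  also have "\<dots> \<le> min (lmax * L) (lmax * lmin)"
    using assms by (intro min.mono mult_right_mono) (simp_all add: mult.commute)
  also have "\<dots> = lmax * min L lmin"
    using assms by (simp add: min_mult_distrib_left)
  also have "\<dots> \<le> lmax * min L y"
    using assms by (intro mult_left_mono) auto
  finally show ?thesis .
qed

locale positive_spectrum =
  fixes n :: nat and lam :: "nat \<Rightarrow> real"
  assumes n_pos: "0 < n" and lam_pos: "\<And>i. i < n \<Longrightarrow> 0 < lam i"
begin

definition lmax :: real where "lmax = Max (lam ` {..<n})"

definition lmin :: real where "lmin = Min (lam ` {..<n})"

lemma le_lmax: "i < n \<Longrightarrow> lam i \<le> lmax"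
  unfolding lmax_def by simp

lemma lmin_le: "i < n \<Longrightarrow> lmin \<le> lam i"
  unfolding lmin_def by simp

lemma lmin_pos: "0 < lmin"
proof -
  have "lmin \<in> lam ` {..<n}"
    unfolding lmin_def using n_pos by (intro Min_in) auto
  then show ?thesis
    using lam_pos by auto
qed

lemma lmin_le_lmax: "lmin \<le> lmax"
  using lmin_le[OF n_pos] le_lmax[OF n_pos] by simp

lemma le_one_minus_ratio_if_prod_eq_one:
  fixes a :: real
  defines "T \<equiv> \<Sum>j<n. lam j"
  assumes prod: "(\<Prod>i<n. a + real n / T * lam i) = 1"
  shows "a \<le> 1 - lmin / lmax"
proof -
  have T: "0 < T"
    unfolding T_def using n_pos lam_pos by (intro sum_pos) auto
  have T_le: "T \<le> real n * lmax"
    unfolding T_def using sum_bounded_above[of "{..<n}" lam lmax] le_lmax by simp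
  obtain i where i: "i < n" and factor: "a + real n / T * lam i \<le> 1"
    using ex_factor_le_one_if_prod_eq_one[OF _ _ prod] n_pos by auto
  have "lmin / lmax = real n * lmin / (real n * lmax)"
    using n_pos by simp
  also have "\<dots> \<le> real n * lmin / T"
    using T T_le lmin_pos by (intro divide_left_mono) auto
  also have "\<dots> \<le> real n * lam i / T"
    using T lmin_le[OF i] by (intro divide_right_mono mult_left_mono) auto
  finally show ?thesis
    using factor by simp
qed

definition wf_distortion :: "real \<Rightarrow> real" where
  "wf_distortion L = (\<Sum>i<n. min L (lam i))"

definition gap_factor :: "real \<Rightarrow> real \<Rightarrow> nat \<Rightarrow> real" where
  "gap_factor a L i = (a + real n / wf_distortion L * lam i) * min L (lam i) / lam i"

lemma wf_distortion_pos: "0 < L \<Longrightarrow> 0 < wf_distortion L"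
  unfolding wf_distortion_def using n_pos lam_pos by (intro sum_pos) auto

lemma ratio_mult_wf_distortion_le:
  assumes L: "0 \<le> L" and i: "i < n"
  shows "lmin / lmax * wf_distortion L \<le> real n * min L (lam i)"
proof -
  have "lmin * wf_distortion L \<le> real n * (lmax * min L (lam i))"
    using sum_bounded_above[of "{..<n}" "\<lambda>k. lmin * min L (lam k)" "lmax * min L (lam i)"]
      mult_min_le_mult_min[OF L lmin_pos lmin_le_lmax lmin_le[OF i] le_lmax]
    by (simp add: wf_distortion_def sum_distrib_left)
  then show ?thesis
    using lmin_pos lmin_le_lmax by (simp add: field_simps)
qed

lemma log_rate_gap_eq_sum_log_gap_factor:
  assumes a: "0 \<le> a" and L: "0 < L"
  shows "log b (\<Prod>i<n. a + real n / wf_distortion L * lam i) - (\<Sum>i<n. log b (lam i / min L (lam i)))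
    = (\<Sum>i<n. log b (gap_factor a L i))"
proof -
  have factor_pos: "0 < a + real n / wf_distortion L * lam i" if "i < n" for i
    using a wf_distortion_pos[OF L] lam_pos[OF that] n_pos by (intro add_nonneg_pos) auto
  have "log b (\<Prod>i<n. a + real n / wf_distortion L * lam i)
      = (\<Sum>i<n. log b (a + real n / wf_distortion L * lam i))"
    using factor_pos by (intro log_prod_pos) auto
  moreover have "log b (gap_factor a L i)
      = log b (a + real n / wf_distortion L * lam i) - log b (lam i / min L (lam i))"
    if "i < n" for i
    unfolding gap_factor_def using factor_pos[OF that] L lam_pos[OF that]
    by (simp add: log_mult_pos log_divide_pos)
  ultimately show ?thesis
    by (simp add: sum_subtractf)
qed

lemma ratio_le_gap_factor:
  assumes a: "0 \<le> a" and L: "0 < L" and i: "i < n"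
  shows "lmin / lmax \<le> gap_factor a L i"
proof -
  have "lmin / lmax \<le> real n * min L (lam i) / wf_distortion L"
    using ratio_mult_wf_distortion_le[OF _ i] L wf_distortion_pos[OF L]
    by (simp add: field_simps)
  also have "\<dots> \<le> gap_factor a L i"
    unfolding gap_factor_def using a L lam_pos[OF i] by (simp add: field_simps)
  finally show ?thesis .
qed

lemma sum_gap_factor_le:
  assumes a: "0 \<le> a" and L: "0 < L"
  shows "(\<Sum>i<n. gap_factor a L i) \<le> real n * (a + 1)"
proof -
  have "gap_factor a L i = a * (min L (lam i) / lam i) + real n / wf_distortion L * min L (lam i)"
    if "i < n" for i
    unfolding gap_factor_def using lam_pos[OF that] by (simp add: field_simps)
  then have "(\<Sum>i<n. gap_factor a L i)
      = a * (\<Sum>i<n. min L (lam i) / lam i) + real n / wf_distortion L * wf_distortion L"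
    by (simp add: sum.distrib sum_distrib_left wf_distortion_def)
  also have "\<dots> \<le> a * real n + real n"
    using sum_bounded_above[of "{..<n}" "\<lambda>i. min L (lam i) / lam i" 1] lam_pos a
      wf_distortion_pos[OF L]
    by (intro add_mono mult_left_mono) auto
  finally show ?thesis
    by (simp add: algebra_simps)
qed

lemma rate_gap_bounds:
  fixes a b L :: real
  defines "gap \<equiv> log b (\<Prod>i<n. a + real n / wf_distortion L * lam i)
    - (\<Sum>i<n. log b (lam i / min L (lam i)))"
  assumes b: "1 < b" and L: "0 < L" and a: "0 \<le> a" "a \<le> 1 - lmin / lmax"
  shows "real n * log b (lmin / lmax) \<le> gap" and "gap \<le> real n * log b (2 - lmin / lmax)"
proof -
  have gap: "gap = (\<Sum>i<n. log b (gap_factor a L i))"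
    unfolding gap_def by (rule log_rate_gap_eq_sum_log_gap_factor[OF a(1) L])
  have ratio_pos: "0 < lmin / lmax"
    using lmin_pos lmin_le_lmax by simp
  have "real n * log b (lmin / lmax) = (\<Sum>i<n. log b (lmin / lmax))"
    by simp
  also have "\<dots> \<le> gap"
    unfolding gap using b ratio_pos ratio_le_gap_factor[OF a(1) L]
    by (intro sum_mono log_mono) auto
  finally show "real n * log b (lmin / lmax) \<le> gap" .
  have "(\<Sum>i<n. gap_factor a L i) \<le> real n * (2 - lmin / lmax)"
    using sum_gap_factor_le[OF a(1) L] mult_left_mono[OF a(2), of "real n"]
    by (simp add: algebra_simps)
  moreover have "0 < gap_factor a L i" if "i < n" for i
    using ratio_pos ratio_le_gap_factor[OF a(1) L that] by linarith
  ultimately have "gap \<le> real (card {..<n}) * log b (2 - lmin / lmax)"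
    unfolding gap using b lmin_pos lmin_le_lmax
    by (intro sum_log_le_card_mult_log) (auto simp: field_simps)
  then show "gap \<le> real n * log b (2 - lmin / lmax)"
    by simp
qed

end

theorem corollary1:
  fixes b :: real and n :: nat and S :: "real mat" and lam :: "nat \<Rightarrow> real"
    and alpha_star D L :: real
  assumes b: "b > 1"
    and sym: "symmetric_mat S"
    and pd: "pos_def_mat n S"
    and eig: "eigenvalues_mult n S lam"
    and astar: "alpha_star \<in> {0..1}" "R_alpha b n S alpha_star (mat_trace S) = 0"
    and D: "0 < D" "D \<le> mat_trace S"
    and L: "L > 0" "(\<Sum>i<n. min L (lam i)) = D"
  shows "let lmax = Max (lam ` {..<n}); lmin = Min (lam ` {..<n}); kappa = lmax / lmin
         in 1/2 * log b (1 / kappa) \<le> (R_alpha b n S alpha_star D - R_wf b n lam L) / real n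
          \<and> (R_alpha b n S alpha_star D - R_wf b n lam L) / real n \<le> 1/2 * log b (2 - 1 / kappa)"
proof -
  have S: "S \<in> carrier_mat n n"
    using pd unfolding pos_def_mat_def by simp
  have n: "0 < n"
    using D(1) L(2) by (cases n) auto
  then interpret positive_spectrum n lam
    using eigenvalue_pos_if_pos_def[OF pd eig] by unfold_locales
  have alpha: "0 \<le> alpha_star"
    using astar(1) by simp
  have R_alpha: "R_alpha b n S alpha_star \<Delta> = 1/2 * log b (\<Prod>i<n. alpha_star + real n / \<Delta> * lam i)"
    if "0 < \<Delta>" for \<Delta>
    unfolding R_alpha_def using det_scalar_plus_smult_eq_prod_eigenvalues[OF S eig] n that by simp
  define T where "T = (\<Sum>j<n. lam j)"
  have T: "mat_trace S = T"
    unfolding T_def by (rule mat_trace_eq_sum_eigenvalues[OF S eig])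
  have "0 < (\<Prod>i<n. alpha_star + real n / T * lam i)"
    using D T alpha n lam_pos by (intro prod_pos add_nonneg_pos) auto
  moreover have "log b (\<Prod>i<n. alpha_star + real n / T * lam i) = 0"
    using astar(2) R_alpha[of T] D T by simp
  ultimately have "(\<Prod>i<n. alpha_star + real n / T * lam i) = 1"
    using b by (metis less_irrefl log_less_zero_cancel_iff zero_less_log_cancel_iff linorder_neqE_linordered_idom)
  then have "alpha_star \<le> 1 - lmin / lmax"
    unfolding T_def by (rule le_one_minus_ratio_if_prod_eq_one)
  note gap_bounds = rate_gap_bounds[OF b L(1) alpha this, unfolded wf_distortion_def L(2)]
  have "R_alpha b n S alpha_star D - R_wf b n lam L
      = 1/2 * (log b (\<Prod>i<n. alpha_star + real n / D * lam i) - (\<Sum>i<n. log b (lam i / min L (lam i))))"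
    unfolding R_wf_def R_alpha[OF D(1)] by (simp add: sum_distrib_left right_diff_distrib)
  then show ?thesis
    unfolding Let_def lmax_def[symmetric] lmin_def[symmetric]
    using gap_bounds n by (simp add: pos_le_divide_eq pos_divide_le_eq mult.commute)
qed

end
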